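(* Let $n$ be odd and $\alpha>0$ with $\alpha\,bin(n,\tfrac12,i)\le1$ for all $i$. Let $P_e$ be the distribution on $\{0,1\}^{n+1}$ (coordinates indexed by $i\in\{0,\ldots,n\}$) in which coordinate $i$ is independently $1$ with probability $S_e(i)$ and $0$ otherwise. Then $\sum_{u\in\{0,1\}^{n+1}}\sqrt{P_e(u)}\le e^{\sqrt\alpha\,(2\pi n)^{1/4}}$. The same bound holds for the analogous distribution $P_o$ induced by $S_o$.
   Context: $bin(n,p,k)=\binom nk p^k(1-p)^{n-k}$. $S_e(i)=\alpha\,bin(n,\tfrac12,i)$ for even $i$ and $0$ for odd $i$; $S_o(i)=\alpha\,bin(n,\tfrac12,i)$ for odd $i$ and $0$ for even $i$, for $i\in\{0,\ldots,n\}$. *)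

theory Defs
  imports "HOL-Analysis.Analysis"
begin

definition bin :: "nat \<Rightarrow> real \<Rightarrow> nat \<Rightarrow> real" where
  "bin n p k = real (n choose k) * p ^ k * (1 - p) ^ (n - k)"

definition S_e :: "real \<Rightarrow> nat \<Rightarrow> nat \<Rightarrow> real" where
  "S_e \<alpha> n i = (if even i then \<alpha> * bin n (1/2) i else 0)"

definition S_o :: "real \<Rightarrow> nat \<Rightarrow> nat \<Rightarrow> real" where
  "S_o \<alpha> n i = (if odd i then \<alpha> * bin n (1/2) i else 0)"

text \<open>A point u of {0,1}^{n+1} is a function u :: nat => bool, extensional outside {0..n}.\<close>
definition prod_dist :: "(nat \<Rightarrow> real) \<Rightarrow> nat \<Rightarrow> (nat \<Rightarrow> bool) \<Rightarrow> real" where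
  "prod_dist S n u = (\<Prod>i\<in>{0..n}. if u i then S i else 1 - S i)"

definition cube :: "nat \<Rightarrow> (nat \<Rightarrow> bool) set" where
  "cube n = {0..n} \<rightarrow>\<^sub>E (UNIV :: bool set)"

end

theory Submission
  imports Defs
begin

(* Independence of the coordinates factors the sum of sqrt P(u) over the cube into
   prod_i (sqrt S_i + sqrt (1 - S_i)) <= exp (sum_i sqrt S_i), so it suffices to bound the sum of
   sqrt (bin n (1/2) i) over one parity class of i by n^(1/4), where n = 2m+1.

   The key estimate compares row n of Pascal's triangle with row 2n+1:
     bin n (1/2) i <= 4 sqrt n * bin (2n+1) (1/2) (i+m+1)^2.
   At the centre i = m it follows from the Wallis-type bounds 1/(4k) <= c_k^2 <= (2k-1)/(4k^2)
   for c_k = bin (2k) (1/2) k; for i > m the ratio of the two sides decreases (a cubic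
   polynomial inequality), and i < m is the mirror image. Taking square roots, each term is at
   most 2 n^(1/4) bin (2n+1) (1/2) (i+m+1), and the indices i+m+1 of one parity class carry
   probability at most 1/2 in row 2n+1. *)

lemma bin_half: "bin n (1/2) k = real (n choose k) / 2 ^ n"
proof (cases "k \<le> n")
  case True
  then have "(1/2::real) ^ k * (1/2) ^ (n - k) = (1/2) ^ n"
    by (simp flip: power_add)
  then show ?thesis
    unfolding bin_def by (simp add: mult.assoc power_one_over)
qed (simp add: bin_def binomial_eq_0)

lemma bin_half_nonneg: "0 \<le> bin n (1/2) k"
  by (simp add: bin_half)

lemma bin_half_pos: "k \<le> n \<Longrightarrow> 0 < bin n (1/2) k"
  by (simp add: bin_half)

lemma bin_half_symmetric: "k \<le> n \<Longrightarrow> bin n (1/2) (n - k) = bin n (1/2) k"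
  by (simp add: bin_half binomial_symmetric[symmetric])

lemma bin_half_Suc: "real (Suc k) * bin n (1/2) (Suc k) = real (n - k) * bin n (1/2) k"
proof -
  have "Suc k * (n choose Suc k) = (n - k) * (n choose k)"
    using binomial_absorption[of k n] binomial_absorb_comp[of n k] by simp
  then have "real (Suc k) * real (n choose Suc k) = real (n - k) * real (n choose k)"
    by (metis of_nat_mult)
  then show ?thesis
    by (simp add: bin_half)
qed

lemma choose_odd_central: "Suc (2 * k) choose Suc k = Suc (2 * k) choose k"
  using central_binomial_odd[of "Suc (2 * k)"] by simp

lemma bin_half_odd_central: "bin (Suc (2 * k)) (1/2) k = bin (2 * Suc k) (1/2) (Suc k)"
proof -
  have "2 * Suc k choose Suc k = 2 * (Suc (2 * k) choose k)"
    using choose_odd_central[of k] by simp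
  then show ?thesis
    by (simp add: bin_half)
qed

lemma bin_half_central_Suc:
  "bin (2 * Suc k) (1/2) (Suc k) = (2 * k + 1) / (2 * k + 2) * bin (2 * k) (1/2) k"
proof -
  have "Suc k * (Suc (2 * k) choose k) = Suc (2 * k) * (2 * k choose k)"
    using Suc_times_binomial[of k "2 * k"] choose_odd_central[of k] by simp
  then have "real (Suc k) * real (Suc (2 * k) choose k) = real (Suc (2 * k)) * real (2 * k choose k)"
    by (metis of_nat_mult)
  then have odd_central: "real (Suc (2 * k) choose k) = (2 * k + 1) * real (2 * k choose k) / (k + 1)"
    by (simp add: field_simps)
  show ?thesis
    unfolding bin_half_odd_central[symmetric] unfolding bin_half odd_central by (simp add: field_simps)
qed

lemma bin_half_central_Suc_sq:
  "(2 * real k + 2) ^ 2 * bin (2 * Suc k) (1/2) (Suc k) ^ 2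
    = (2 * real k + 1) ^ 2 * bin (2 * k) (1/2) k ^ 2"
proof -
  have "(2 * real k + 2) * bin (2 * Suc k) (1/2) (Suc k) = (2 * real k + 1) * bin (2 * k) (1/2) k"
    unfolding bin_half_central_Suc by (simp add: field_simps)
  then show ?thesis
    by (simp flip: power_mult_distrib)
qed

lemma bin_half_central_sq_lower: "1 \<le> k \<Longrightarrow> 1 \<le> 4 * k * bin (2 * k) (1/2) k ^ 2"
proof (induction k rule: nat_induct_at_least)
  case base
  then show ?case by (simp add: bin_half power2_eq_square)
next
  case (Suc k)
  have "4 * real k * (k + 1) * 1 \<le> (2 * real k + 1) ^ 2"
    by (simp add: power2_eq_square algebra_simps)
  also have "\<dots> \<le> (2 * real k + 1) ^ 2 * (4 * real k * bin (2 * k) (1/2) k ^ 2)"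
    using Suc.IH by (simp add: mult_le_cancel_left1)
  also have "\<dots> = 4 * real k * ((2 * real k + 2) ^ 2 * bin (2 * Suc k) (1/2) (Suc k) ^ 2)"
    using bin_half_central_Suc_sq[of k] by (simp add: algebra_simps)
  also have "\<dots> = 4 * real k * (k + 1) * (4 * real (Suc k) * bin (2 * Suc k) (1/2) (Suc k) ^ 2)"
    by (simp add: power2_eq_square algebra_simps)
  finally show ?case
    by (rule mult_left_le_imp_le) (use Suc.hyps in simp)
qed

lemma bin_half_central_sq_upper: "1 \<le> k \<Longrightarrow> (2 * k) ^ 2 * bin (2 * k) (1/2) k ^ 2 \<le> 2 * k - 1"
proof (induction k rule: nat_induct_at_least)
  case base
  then show ?case by (simp add: bin_half power2_eq_square)
next
  case (Suc k)
  have "(2 * real k) ^ 2 * ((2 * real (Suc k)) ^ 2 * bin (2 * Suc k) (1/2) (Suc k) ^ 2)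
      = (2 * real k + 1) ^ 2 * ((2 * real k) ^ 2 * bin (2 * k) (1/2) k ^ 2)"
    using bin_half_central_Suc_sq[of k] by (simp add: algebra_simps)
  also have "\<dots> \<le> (2 * real k + 1) ^ 2 * (2 * real k - 1)"
    using Suc.IH by (intro mult_left_mono) auto
  also have "\<dots> \<le> (2 * real k) ^ 2 * (2 * real (Suc k) - 1)"
    using Suc.hyps by (simp add: power2_eq_square algebra_simps)
  finally show ?case
    by (rule mult_left_le_imp_le) (use Suc.hyps in simp)
qed

lemma bin_half_central_le_sq:
  "bin (2 * m + 1) (1/2) m \<le> 4 * sqrt (2 * m + 1) * bin (2 * (2 * m + 1) + 1) (1/2) (2 * m + 1) ^ 2"
proof -
  define a where "a = bin (2 * Suc m) (1/2) (Suc m)"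
  define b where "b = bin (2 * (2 * Suc m)) (1/2) (2 * Suc m)"
  have a_eq: "bin (2 * m + 1) (1/2) m = a"
    unfolding a_def using bin_half_odd_central[of m] by simp
  have b_eq: "bin (2 * (2 * m + 1) + 1) (1/2) (2 * m + 1) = b"
    unfolding b_def using bin_half_odd_central[of "2 * m + 1"] by simp
  have "(2 * real (Suc m) * a) ^ 2 \<le> 2 * m + 1"
    using bin_half_central_sq_upper[of "Suc m"] unfolding a_def by (simp add: power_mult_distrib)
  then have "2 * real (Suc m) * a \<le> sqrt (2 * m + 1)"
    by (rule real_le_rsqrt)
  also have "\<dots> \<le> sqrt (2 * m + 1) * (4 * real (2 * Suc m) * b ^ 2)"
    using bin_half_central_sq_lower[of "2 * Suc m"] unfolding b_def by (simp add: mult_le_cancel_left1)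
  also have "\<dots> = 2 * real (Suc m) * (4 * sqrt (2 * m + 1) * b ^ 2)"
    by simp
  finally show ?thesis
    unfolding a_eq b_eq by (rule mult_left_le_imp_le) simp
qed

lemma cubic_ratio_le: "0 \<le> t \<Longrightarrow> (a - t) * (2 * a + t) ^ 2 \<le> (a + t) * (2 * a - t) ^ (2::nat)"
  for a t :: real
proof -
  assume "0 \<le> t"
  then have "0 \<le> t ^ 3"
    by simp
  moreover have "(a + t) * (2 * a - t) ^ 2 - (a - t) * (2 * a + t) ^ 2 = 2 * t ^ 3"
    by (simp add: power2_eq_square power3_eq_cube algebra_simps)
  ultimately show ?thesis
    by linarith
qed

lemma bin_half_ratio_step:
  fixes m i :: nat
  defines "n \<equiv> 2 * m + 1"
  assumes "m \<le> i" "i < n"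
  shows "bin n (1/2) (Suc i) * bin (2 * n + 1) (1/2) (i + m + 1) ^ 2
    \<le> bin n (1/2) i * bin (2 * n + 1) (1/2) (Suc (i + m + 1)) ^ 2"
proof -
  define j where "j = i + m + 1"
  define p where "p = bin n (1/2)"
  define q where "q = bin (2 * n + 1) (1/2)"
  define x where "x = real (Suc i)"
  define y where "y = real (Suc j)"
  have p_step: "x * p (Suc i) = real (n - i) * p i"
    unfolding x_def p_def by (rule bin_half_Suc)
  have q_step: "y * q (Suc j) = real (2 * n + 1 - j) * q j"
    unfolding y_def q_def by (rule bin_half_Suc)
  have "real (n - i) * y ^ 2 \<le> x * real (2 * n + 1 - j) ^ 2"
    using cubic_ratio_le[of "real i - m" "m + 1"] assms
    unfolding x_def y_def j_def n_def by (simp add: of_nat_diff algebra_simps)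
  then have "(real (n - i) * y ^ 2) * (p i * q j ^ 2) \<le> (x * real (2 * n + 1 - j) ^ 2) * (p i * q j ^ 2)"
    unfolding p_def q_def by (intro mult_right_mono) (simp_all add: bin_half_nonneg)
  then have "(x * p (Suc i)) * (y * q j) ^ 2 \<le> x * p i * (real (2 * n + 1 - j) * q j) ^ 2"
    unfolding p_step by (simp add: power_mult_distrib ac_simps)
  then have "(x * y ^ 2) * (p (Suc i) * q j ^ 2) \<le> (x * y ^ 2) * (p i * q (Suc j) ^ 2)"
    unfolding q_step[symmetric] by (simp add: power_mult_distrib ac_simps)
  moreover have "0 < x * y ^ 2"
    unfolding x_def y_def by simp
  ultimately show ?thesis
    unfolding p_def q_def j_def by (rule mult_left_le_imp_le)
qed


lemma ratio_bound_propagate: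
  fixes f g :: "nat \<Rightarrow> real"
  assumes step: "\<And>i. a \<le> i \<Longrightarrow> i < b \<Longrightarrow> f (Suc i) * g i \<le> f i * g (Suc i)"
    and pos: "\<And>i. a \<le> i \<Longrightarrow> i \<le> b \<Longrightarrow> 0 < g i"
    and start: "f a \<le> K * g a"
    and "a \<le> i" "i \<le> b"
  shows "f i \<le> K * g i"
  using assms(4,5)
proof (induction i rule: nat_induct_at_least)
  case base
  then show ?case using start by simp
next
  case (Suc i)
  have "f (Suc i) * g i \<le> f i * g (Suc i)"
    using step Suc by simp
  also have "\<dots> \<le> K * g i * g (Suc i)"
    using Suc pos by (intro mult_right_mono) (auto intro: less_imp_le)
  finally have "g i * f (Suc i) \<le> g i * (K * g (Suc i))"
    by (simp add: ac_simps)
  then show ?case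
    by (rule mult_left_le_imp_le) (use Suc pos in simp)
qed

lemma bin_half_le_sq_bin_half:
  fixes m i :: nat
  defines "n \<equiv> 2 * m + 1"
  assumes "i \<le> n"
  shows "bin n (1/2) i \<le> 4 * sqrt n * bin (2 * n + 1) (1/2) (i + m + 1) ^ 2"
proof -
  have upper_half: "bin n (1/2) k \<le> 4 * sqrt n * bin (2 * n + 1) (1/2) (k + m + 1) ^ 2"
    if "m \<le> k" "k \<le> n" for k
  proof (rule ratio_bound_propagate[where f = "bin n (1/2)" and a = m and b = n])
    show "bin n (1/2) (Suc k) * bin (2 * n + 1) (1/2) (k + m + 1) ^ 2
        \<le> bin n (1/2) k * bin (2 * n + 1) (1/2) (Suc k + m + 1) ^ 2" if "m \<le> k" "k < n" for k
      using bin_half_ratio_step[of m k] that unfolding n_def by simp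
    show "0 < bin (2 * n + 1) (1/2) (k + m + 1) ^ 2" if "k \<le> n" for k
      using that by (intro zero_less_power bin_half_pos) (simp add: n_def)
    show "bin n (1/2) m \<le> 4 * sqrt n * bin (2 * n + 1) (1/2) (m + m + 1) ^ 2"
      using bin_half_central_le_sq[of m] unfolding n_def by (simp flip: mult_2)
  qed (use that in auto)
  show ?thesis
  proof (cases "m \<le> i")
    case True
    then show ?thesis using upper_half assms by simp
  next
    case False
    have mirror: "n - i + m + 1 = (2 * n + 1) - (i + m + 1)"
      using False assms unfolding n_def by simp
    have "bin n (1/2) i = bin n (1/2) (n - i)"
      using assms by (simp add: bin_half_symmetric)
    also have "\<dots> \<le> 4 * sqrt n * bin (2 * n + 1) (1/2) (n - i + m + 1) ^ 2"
      using False by (intro upper_half) (auto simp: n_def)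
    also have "bin (2 * n + 1) (1/2) (n - i + m + 1) = bin (2 * n + 1) (1/2) (i + m + 1)"
      unfolding mirror using assms by (intro bin_half_symmetric) simp
    finally show ?thesis .
  qed
qed

lemma sum_parity_bin_half:
  assumes "0 < N"
  shows "(\<Sum>j\<le>N. if even j = b then bin N (1/2) j else 0) = 1/2"
proof -
  have "(\<Sum>j\<le>N. if even j = b then bin N (1/2) j else 0)
      = (\<Sum>j\<le>N. if even j = b then real (N choose j) else 0) / 2 ^ N"
    unfolding bin_half sum_divide_distrib by (intro sum.cong) auto
  also have "\<dots> = 1/2"
    using choose_even_sum[OF assms, where 'a = real] choose_odd_sum[OF assms, where 'a = real]
    by (cases b) (simp_all add: field_simps)
  finally show ?thesis .
qed

lemma sum_parity_sqrt_bin_half_le: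
  fixes m :: nat
  defines "n \<equiv> 2 * m + 1"
  shows "(\<Sum>i\<in>{0..n}. if even i = b then sqrt (bin n (1/2) i) else 0) \<le> sqrt (sqrt n)"
proof -
  define N where "N = 2 * n + 1"
  define c where "c = (b = even (m + 1))"
  have "(\<Sum>i\<in>{0..n}. if even i = b then bin N (1/2) (i + m + 1) else 0)
      = (\<Sum>i\<in>{0..n}. (\<lambda>j. if even j = c then bin N (1/2) j else 0) (i + m + 1))"
    unfolding c_def by (intro sum.cong) auto
  also have "\<dots> = (\<Sum>j\<in>(\<lambda>i. i + m + 1) ` {0..n}. if even j = c then bin N (1/2) j else 0)"
    by (rule sum.reindex[symmetric, unfolded comp_def]) (auto simp: inj_on_def)
  also have "\<dots> \<le> (\<Sum>j\<le>N. if even j = c then bin N (1/2) j else 0)"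
    by (rule sum_mono2) (auto simp: N_def n_def bin_half_nonneg)
  also have "\<dots> = 1/2"
    by (rule sum_parity_bin_half) (simp add: N_def)
  finally have shifted_sum: "(\<Sum>i\<in>{0..n}. if even i = b then bin N (1/2) (i + m + 1) else 0) \<le> 1/2" .
  have "(\<Sum>i\<in>{0..n}. if even i = b then sqrt (bin n (1/2) i) else 0)
      \<le> (\<Sum>i\<in>{0..n}. 2 * sqrt (sqrt n) * (if even i = b then bin N (1/2) (i + m + 1) else 0))"
  proof (intro sum_mono)
    fix i assume "i \<in> {0..n}"
    then have "sqrt (bin n (1/2) i) \<le> sqrt (4 * sqrt n * bin N (1/2) (i + m + 1) ^ 2)"
      unfolding N_def n_def by (intro real_sqrt_le_mono bin_half_le_sq_bin_half) simp
    also have "\<dots> = 2 * sqrt (sqrt n) * bin N (1/2) (i + m + 1)"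
      by (simp add: real_sqrt_mult bin_half_nonneg)
    finally show "(if even i = b then sqrt (bin n (1/2) i) else 0)
        \<le> 2 * sqrt (sqrt n) * (if even i = b then bin N (1/2) (i + m + 1) else 0)"
      by simp
  qed
  also have "\<dots> = 2 * sqrt (sqrt n) * (\<Sum>i\<in>{0..n}. if even i = b then bin N (1/2) (i + m + 1) else 0)"
    by (rule sum_distrib_left[symmetric])
  also have "\<dots> \<le> 2 * sqrt (sqrt n) * (1/2)"
    using shifted_sum by (intro mult_left_mono) simp_all
  finally show ?thesis
    by simp
qed

lemma real_sqrt_prod: "sqrt (\<Prod>i\<in>A. f i) = (\<Prod>i\<in>A. sqrt (f i))"
  by (induction A rule: infinite_finite_induct) (auto simp: real_sqrt_mult)

lemma sum_cube_sqrt_prod_dist: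
  "(\<Sum>u\<in>cube n. sqrt (prod_dist S n u)) = (\<Prod>i\<in>{0..n}. sqrt (S i) + sqrt (1 - S i))"
proof -
  have "(\<Prod>i\<in>{0..n}. sqrt (S i) + sqrt (1 - S i))
      = (\<Prod>i\<in>{0..n}. \<Sum>b\<in>UNIV. if b then sqrt (S i) else sqrt (1 - S i))"
    by (simp add: UNIV_bool add.commute)
  also have "\<dots> = (\<Sum>u\<in>cube n. \<Prod>i\<in>{0..n}. if u i then sqrt (S i) else sqrt (1 - S i))"
    unfolding cube_def by (rule prod_sum_PiE) auto
  also have "\<dots> = (\<Sum>u\<in>cube n. sqrt (prod_dist S n u))"
    unfolding prod_dist_def real_sqrt_prod by (intro sum.cong prod.cong) auto
  finally show ?thesis ..
qed

lemma prod_sqrt_add_sqrt_le_exp: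
  assumes "finite A" and "\<And>i. i \<in> A \<Longrightarrow> 0 \<le> s i \<and> s i \<le> 1"
  shows "(\<Prod>i\<in>A. sqrt (s i) + sqrt (1 - s i)) \<le> exp (\<Sum>i\<in>A. sqrt (s i))"
proof -
  have "(\<Prod>i\<in>A. sqrt (s i) + sqrt (1 - s i)) \<le> (\<Prod>i\<in>A. exp (sqrt (s i)))"
  proof (rule prod_mono)
    fix i assume i: "i \<in> A"
    have "sqrt (s i) + sqrt (1 - s i) \<le> sqrt (s i) + 1"
      using assms(2)[OF i] by simp
    also have "\<dots> \<le> exp (sqrt (s i))"
      by (simp add: add.commute exp_ge_add_one_self)
    finally show "0 \<le> sqrt (s i) + sqrt (1 - s i) \<and> sqrt (s i) + sqrt (1 - s i) \<le> exp (sqrt (s i))"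
      using assms(2)[OF i] by simp
  qed
  also have "\<dots> = exp (\<Sum>i\<in>A. sqrt (s i))"
    using assms(1) by (simp add: exp_sum)
  finally show ?thesis .
qed

lemma sum_cube_sqrt_prod_dist_parity_le:
  fixes m :: nat and \<alpha> :: real
  defines "n \<equiv> 2 * m + 1"
  assumes "0 < \<alpha>" and "\<forall>i\<in>{0..n}. \<alpha> * bin n (1/2) i \<le> 1"
    and S: "\<And>i. S i = (if even i = b then \<alpha> * bin n (1/2) i else 0)"
  shows "(\<Sum>u\<in>cube n. sqrt (prod_dist S n u)) \<le> exp (sqrt \<alpha> * sqrt (sqrt n))"
proof -
  have "(\<Sum>u\<in>cube n. sqrt (prod_dist S n u)) \<le> exp (\<Sum>i\<in>{0..n}. sqrt (S i))"
    unfolding sum_cube_sqrt_prod_dist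
    using assms(2,3) by (intro prod_sqrt_add_sqrt_le_exp) (auto simp: S bin_half_nonneg)
  also have "(\<Sum>i\<in>{0..n}. sqrt (S i)) = sqrt \<alpha> * (\<Sum>i\<in>{0..n}. if even i = b then sqrt (bin n (1/2) i) else 0)"
    unfolding S sum_distrib_left by (intro sum.cong) (auto simp: real_sqrt_mult)
  also have "\<dots> \<le> sqrt \<alpha> * sqrt (sqrt n)"
    unfolding n_def using assms(2) by (intro mult_left_mono sum_parity_sqrt_bin_half_le) simp
  finally show ?thesis
    by simp
qed

lemma sqrt_sqrt_le_powr_quarter: "0 \<le> x \<Longrightarrow> sqrt (sqrt x) \<le> (2 * pi * x) powr (1/4)"
proof -
  assume "0 \<le> x"
  then have "sqrt (sqrt x) = x powr (1/4)"
    by (simp add: powr_half_sqrt[symmetric] powr_powr)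
  also have "\<dots> \<le> (2 * pi * x) powr (1/4)"
    using \<open>0 \<le> x\<close> pi_gt3 by (intro powr_mono2) (auto simp: mult_le_cancel_right1)
  finally show ?thesis .
qed

theorem lemma4:
  fixes n :: nat and \<alpha> :: real
  assumes "odd n" and "\<alpha> > 0"
    and "\<forall>i\<in>{0..n}. \<alpha> * bin n (1/2) i \<le> 1"
  shows "(\<Sum>u\<in>cube n. sqrt (prod_dist (S_e \<alpha> n) n u))
           \<le> exp (sqrt \<alpha> * (2 * pi * real n) powr (1/4)) \<and>
         (\<Sum>u\<in>cube n. sqrt (prod_dist (S_o \<alpha> n) n u))
           \<le> exp (sqrt \<alpha> * (2 * pi * real n) powr (1/4))"
proof -
  obtain m where n: "n = 2 * m + 1"
    using \<open>odd n\<close> oddE by blast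
  have parity_bound: "(\<Sum>u\<in>cube n. sqrt (prod_dist S n u)) \<le> exp (sqrt \<alpha> * (2 * pi * real n) powr (1/4))"
    if "\<And>i. S i = (if even i = b then \<alpha> * bin n (1/2) i else 0)" for S b
  proof -
    have "(\<Sum>u\<in>cube n. sqrt (prod_dist S n u)) \<le> exp (sqrt \<alpha> * sqrt (sqrt n))"
      using assms(2,3) that by (rule sum_cube_sqrt_prod_dist_parity_le[where m = m, folded n])
    also have "\<dots> \<le> exp (sqrt \<alpha> * (2 * pi * real n) powr (1/4))"
      using assms(2) by (simp add: mult_left_mono sqrt_sqrt_le_powr_quarter)
    finally show ?thesis .
  qed
  show ?thesis
    using parity_bound[of "S_e \<alpha> n" True] parity_bound[of "S_o \<alpha> n" False]
    by (simp add: S_e_def S_o_def)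
qed

end
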